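(* Let $\alpha\ge-1$, $n$ a positive integer, $\psi_0,\psi_n$ analytic on $\mathbb D$ and $\varphi_0,\varphi_n$ analytic self-maps of $\mathbb D$ such that $C_{\psi_0,\varphi_0}$ and $D_{\psi_n,\varphi_n,n}$ are bounded on $\mathcal H_\alpha$. Suppose $w\in\mathbb D$ satisfies $\varphi_0(w)=\varphi_n(w)=w$ and $\psi_n$ has a zero at $w$ of order at least $n$. Then the point spectrum $\sigma_{p,\alpha}(C_{\psi_0,\varphi_0}+D_{\psi_n,\varphi_n,n})$ is contained in $$\{\psi_0(w)\}\cup\{\psi_0(w)(\varphi_0'(w))^l:\ 1\le l\le n-1\}\cup\Big\{\psi_0(w)(\varphi_0'(w))^l+\binom{l}{n}\psi_n^{(n)}(w)(\varphi_n'(w))^{l-n}:\ l\ge n\Big\}.$$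
   Context: For $\alpha=-1$, $\mathcal H_\alpha$ denotes the Hardy space $H^2$ on the open unit disk $\mathbb D$; for $\alpha>-1$, $\mathcal H_\alpha$ denotes the weighted Bergman space $A^2_\alpha$ of analytic $f$ on $\mathbb D$ with $\int_{\mathbb D}|f(z)|^2(\alpha+1)(1-|z|^2)^\alpha\,dA(z)<\infty$, $dA$ normalized area measure. For $\psi$ analytic on $\mathbb D$, $\varphi$ an analytic self-map of $\mathbb D$ and $n$ a positive integer: $C_{\psi,\varphi}f=\psi\cdot(f\circ\varphi)$ and $D_{\psi,\varphi,n}f=\psi\cdot(f^{(n)}\circ\varphi)$. $\sigma_{p,\alpha}(T)$ is the point spectrum (set of eigenvalues) of $T$ on $\mathcal H_\alpha$. A function $\psi$ has a zero at $w$ of order at least $k$ if $\psi^{(j)}(w)=0$ for $0\le j\le k-1$. Convention: $0^0=1$. *)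

theory Defs
  imports "HOL-Analysis.Analysis"
begin

abbreviation udisk :: "complex set" where "udisk \<equiv> ball 0 1"

text \<open>Squared norm (as extended non-negative real) in H_alpha.
  alpha = -1: Hardy space H^2, sup over 0 <= r < 1 of the integral means
  (1/(2 pi)) \<integral>_0^{2pi} |f(r e^{it})|^2 dt.
  alpha > -1: weighted Bergman space, \<integral>_D |f|^2 (alpha+1)(1-|z|^2)^alpha dA,
  where dA = (1/pi) dx dy is normalized area measure.\<close>
definition Hnorm2 :: "real \<Rightarrow> (complex \<Rightarrow> complex) \<Rightarrow> ennreal" where
  "Hnorm2 \<alpha> f =
     (if \<alpha> = -1 then
        (SUP r\<in>{0..<1::real}.
           (\<integral>\<^sup>+ t\<in>{0..2*pi}. ennreal ((cmod (f (complex_of_real r * cis t)))\<^sup>2) \<partial>lborel)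
             / ennreal (2*pi))
      else
        (\<integral>\<^sup>+ z\<in>udisk. ennreal ((cmod (f z))\<^sup>2 * (\<alpha>+1) * (1 - (cmod z)\<^sup>2) powr \<alpha> / pi) \<partial>lborel))"

definition Hspace :: "real \<Rightarrow> (complex \<Rightarrow> complex) set" where
  "Hspace \<alpha> = {f. f holomorphic_on udisk \<and> Hnorm2 \<alpha> f < \<infinity>}"

definition Hnorm :: "real \<Rightarrow> (complex \<Rightarrow> complex) \<Rightarrow> real" where
  "Hnorm \<alpha> f = sqrt (enn2real (Hnorm2 \<alpha> f))"

definition bounded_on_H :: "real \<Rightarrow> ((complex \<Rightarrow> complex) \<Rightarrow> (complex \<Rightarrow> complex)) \<Rightarrow> bool" where
  "bounded_on_H \<alpha> T \<longleftrightarrow>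
     (\<forall>f\<in>Hspace \<alpha>. T f \<in> Hspace \<alpha>) \<and>
     (\<exists>C. \<forall>f\<in>Hspace \<alpha>. Hnorm \<alpha> (T f) \<le> C * Hnorm \<alpha> f)"

definition point_spectrum :: "real \<Rightarrow> ((complex \<Rightarrow> complex) \<Rightarrow> (complex \<Rightarrow> complex)) \<Rightarrow> complex set" where
  "point_spectrum \<alpha> T =
     {c. \<exists>f\<in>Hspace \<alpha>. (\<exists>z\<in>udisk. f z \<noteq> 0) \<and> (\<forall>z\<in>udisk. T f z = c * f z)}"

definition wcomp :: "(complex \<Rightarrow> complex) \<Rightarrow> (complex \<Rightarrow> complex) \<Rightarrow> (complex \<Rightarrow> complex) \<Rightarrow> (complex \<Rightarrow> complex)" where
  "wcomp \<psi> \<phi> f = (\<lambda>z. \<psi> z * f (\<phi> z))"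

definition wdiffcomp :: "(complex \<Rightarrow> complex) \<Rightarrow> (complex \<Rightarrow> complex) \<Rightarrow> nat \<Rightarrow> (complex \<Rightarrow> complex) \<Rightarrow> (complex \<Rightarrow> complex)" where
  "wdiffcomp \<psi> \<phi> n f = (\<lambda>z. \<psi> z * (deriv ^^ n) f (\<phi> z))"

definition self_map :: "(complex \<Rightarrow> complex) \<Rightarrow> bool" where
  "self_map \<phi> \<longleftrightarrow> \<phi> holomorphic_on udisk \<and> \<phi> ` udisk \<subseteq> udisk"

end

theory Submission
  imports Defs "HOL-Complex_Analysis.Complex_Analysis"
begin

text \<open>Let \<open>k\<close> be the order of the zero of an eigenfunction \<open>f\<close> at the common fixed point \<open>w\<close>.
  Divide the eigenvalue equation by \<open>(z - w)^k\<close> and let \<open>z\<close> tend to \<open>w\<close>: the term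
  \<open>\<psi>0(z) f(\<phi>0 z)\<close> contributes \<open>\<psi>0(w) \<phi>0'(w)^k\<close>, and since \<open>\<psi>n\<close> vanishes to order \<open>n\<close> and
  \<open>f^(n)\<close> to order \<open>k - n\<close> at \<open>w\<close>, the term \<open>\<psi>n(z) f^(n)(\<phi>n z)\<close> contributes
  \<open>(k choose n) \<psi>n^(n)(w) \<phi>n'(w)^(k-n)\<close>, which is \<open>0\<close> for \<open>k < n\<close>. The argument is local at \<open>w\<close>.\<close>

lemma holomorphic_factor_zero:
  fixes f :: "complex \<Rightarrow> complex"
  assumes holf: "f holomorphic_on ball \<xi> r" and zeros: "\<And>i. i < m \<Longrightarrow> (deriv ^^ i) f \<xi> = 0"
  obtains g where "g holomorphic_on ball \<xi> r" "\<And>z. z \<in> ball \<xi> r \<Longrightarrow> f z = (z - \<xi>)^m * g z"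
    "g \<xi> = (deriv ^^ m) f \<xi> / fact m"
proof -
  define a where "a i = (deriv ^^ (i + m)) f \<xi> / fact (i + m)" for i
  define g where "g z = (\<Sum>i. a i * (z - \<xi>)^i)" for z
  have sums_g: "(\<lambda>i. a i * (z - \<xi>)^i) sums g z" and f_eq: "f z = (z - \<xi>)^m * g z"
    if z: "z \<in> ball \<xi> r" for z
  proof -
    define p where "p i = (deriv ^^ i) f \<xi> / fact i * (z - \<xi>)^i" for i
    have "p sums f z"
      unfolding p_def by (rule holomorphic_power_series [OF holf z])
    moreover have "(\<Sum>i<m. p i) = 0"
      by (simp add: p_def zeros)
    ultimately have shifted: "(\<lambda>i. (z - \<xi>)^m * (a i * (z - \<xi>)^i)) sums f z"
      using sums_iff_shift' [of p m] by (simp add: p_def a_def power_add mult_ac)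
    have "summable (\<lambda>i. a i * (z - \<xi>)^i)"
    proof (cases "z = \<xi>")
      case True
      then show ?thesis
        by (intro summable_finite [of "{0}"]) auto
    next
      case False
      then show ?thesis
        using summable_mult [OF sums_summable [OF shifted], of "1 / (z - \<xi>)^m"] by simp
    qed
    then show "(\<lambda>i. a i * (z - \<xi>)^i) sums g z"
      by (simp add: summable_sums_iff g_def)
    then show "f z = (z - \<xi>)^m * g z"
      by (intro sums_unique2 [OF shifted] sums_mult)
  qed
  have "g holomorphic_on ball \<xi> r"
    by (meson sums_g power_series_holomorphic)
  moreover have "g \<xi> = (deriv ^^ m) f \<xi> / fact m"
    unfolding g_def a_def by (subst suminf_finite [of "{0}"]) auto
  ultimately show ?thesis
    using that f_eq by blast
qed

lemma tendsto_comp_div_power_at_fixpoint: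
  fixes f U :: "complex \<Rightarrow> complex"
  assumes holf: "f holomorphic_on S" and "open S" "w \<in> S"
    and zeros: "\<And>j. j < k \<Longrightarrow> (deriv ^^ j) f w = 0"
    and U: "(U has_field_derivative U') (at w)" and fixed: "U w = w"
  shows "((\<lambda>z. f (U z) / (z - w)^k) \<longlongrightarrow> U' ^ k * ((deriv ^^ k) f w / fact k)) (at w)"
proof -
  obtain r where "r > 0" and ball_S: "ball w r \<subseteq> S"
    using \<open>open S\<close> \<open>w \<in> S\<close> open_contains_ball by blast
  obtain g where holg: "g holomorphic_on ball w r"
    and f_eq: "\<And>z. z \<in> ball w r \<Longrightarrow> f z = (z - w)^k * g z"
    and gw: "g w = (deriv ^^ k) f w / fact k"
    using holomorphic_factor_zero [OF holomorphic_on_subset [OF holf ball_S]] zeros by blast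
  have U_lim: "(U \<longlongrightarrow> w) (at w)"
    using DERIV_isCont [OF U] fixed by (simp add: isCont_def)
  have "isCont g w"
    using holg \<open>r > 0\<close>
    by (meson centre_in_ball continuous_on_eq_continuous_at holomorphic_on_imp_continuous_on open_ball)
  then have g_U: "((\<lambda>z. g (U z)) \<longlongrightarrow> g w) (at w)"
    using U_lim by (rule isCont_tendsto_compose)
  have quotient: "((\<lambda>z. (U z - w) / (z - w)) \<longlongrightarrow> U') (at w)"
    using U fixed by (simp add: has_field_derivative_iff)
  have "eventually (\<lambda>z. U z \<in> ball w r) (at w)"
    using U_lim \<open>r > 0\<close> by (metis centre_in_ball open_ball topological_tendstoD)
  then have "eventually (\<lambda>z. ((U z - w) / (z - w))^k * g (U z) = f (U z) / (z - w)^k) (at w)"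
    unfolding eventually_at_filter
    by eventually_elim (simp add: f_eq power_divide)
  moreover have "((\<lambda>z. ((U z - w) / (z - w))^k * g (U z)) \<longlongrightarrow> U' ^ k * g w) (at w)"
    by (intro tendsto_intros quotient g_U)
  ultimately show ?thesis
    using gw tendsto_cong by force
qed

lemma tendsto_div_power_at_zero_of_order:
  fixes f :: "complex \<Rightarrow> complex"
  assumes "f holomorphic_on S" "open S" "w \<in> S" "\<And>j. j < k \<Longrightarrow> (deriv ^^ j) f w = 0"
  shows "((\<lambda>z. f z / (z - w)^k) \<longlongrightarrow> (deriv ^^ k) f w / fact k) (at w)"
  using tendsto_comp_div_power_at_fixpoint [OF assms DERIV_ident] by simp

lemma tendsto_weighted_deriv_comp_div_power:
  fixes f R V :: "complex \<Rightarrow> complex"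
  assumes holf: "f holomorphic_on S" and holR: "R holomorphic_on S" and S: "open S" "w \<in> S"
    and V: "(V has_field_derivative V') (at w)" "V w = w"
    and R_zeros: "\<And>j. j < n \<Longrightarrow> (deriv ^^ j) R w = 0"
    and f_zeros: "\<And>j. j < k \<Longrightarrow> (deriv ^^ j) f w = 0"
  shows "((\<lambda>z. R z * (deriv ^^ n) f (V z) / (z - w)^k) \<longlongrightarrow>
           of_nat (k choose n) * (deriv ^^ n) R w * V' ^ (k - n) * ((deriv ^^ k) f w / fact k)) (at w)"
proof -
  define F where "F = (deriv ^^ n) f"
  have R_lim: "((\<lambda>z. R z / (z - w)^n) \<longlongrightarrow> (deriv ^^ n) R w / fact n) (at w)"
    using tendsto_div_power_at_zero_of_order [OF holR S R_zeros] .
  have holF: "F holomorphic_on S"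
    unfolding F_def using holf S by (simp add: holomorphic_higher_deriv)
  have ev_ne: "eventually (\<lambda>z. z \<noteq> w) (at w)"
    by (simp add: eventually_at_filter)
  show ?thesis
  proof (cases "n \<le> k")
    case True
    have "(deriv ^^ (k - n)) F = (deriv ^^ (k - n + n)) f"
      by (simp add: F_def funpow_add)
    then have deriv_F: "(deriv ^^ (k - n)) F w = (deriv ^^ k) f w"
      using True by simp
    have "(deriv ^^ j) F w = 0" if "j < k - n" for j
      using f_zeros [of "j + n"] that by (simp add: F_def funpow_add)
    then have "((\<lambda>z. F (V z) / (z - w)^(k - n)) \<longlongrightarrow>
                 V' ^ (k - n) * ((deriv ^^ k) f w / fact (k - n))) (at w)"
      using tendsto_comp_div_power_at_fixpoint [OF holF S _ V] deriv_F by metis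
    then have "((\<lambda>z. R z / (z - w)^n * (F (V z) / (z - w)^(k - n))) \<longlongrightarrow>
        (deriv ^^ n) R w / fact n * (V' ^ (k - n) * ((deriv ^^ k) f w / fact (k - n)))) (at w)"
      by (rule tendsto_mult [OF R_lim])
    also have "(deriv ^^ n) R w / fact n * (V' ^ (k - n) * ((deriv ^^ k) f w / fact (k - n))) =
        of_nat (k choose n) * (deriv ^^ n) R w * V' ^ (k - n) * ((deriv ^^ k) f w / fact k)"
      using True by (simp add: binomial_fact field_simps)
    finally have lim: "((\<lambda>z. R z / (z - w)^n * (F (V z) / (z - w)^(k - n))) \<longlongrightarrow>
        of_nat (k choose n) * (deriv ^^ n) R w * V' ^ (k - n) * ((deriv ^^ k) f w / fact k)) (at w)" .
    have "eventually (\<lambda>z. R z / (z - w)^n * (F (V z) / (z - w)^(k - n)) =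
                                  R z * F (V z) / (z - w)^k) (at w)"
      using ev_ne by eventually_elim (use True in \<open>simp add: power_add [symmetric]\<close>)
    with lim show ?thesis
      unfolding F_def by (rule Lim_transform_eventually)
  next
    case False
    have "isCont F w"
      using holF S by (meson continuous_on_eq_continuous_at holomorphic_on_imp_continuous_on)
    moreover have "(V \<longlongrightarrow> w) (at w)"
      using DERIV_isCont [OF V(1)] V(2) by (simp add: isCont_def)
    ultimately have "((\<lambda>z. F (V z)) \<longlongrightarrow> F w) (at w)"
      by (rule isCont_tendsto_compose)
    with tendsto_power [OF tendsto_diff [OF tendsto_ident_at tendsto_const]]
    have "((\<lambda>z. (z - w)^(n - k) * F (V z)) \<longlongrightarrow> (w - w)^(n - k) * F w) (at w)"
      by (rule tendsto_mult)
    then have vanish: "((\<lambda>z. (z - w)^(n - k) * F (V z)) \<longlongrightarrow> 0) (at w)"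
      using False by (simp add: power_0_left)
    have "((\<lambda>z. R z / (z - w)^n * ((z - w)^(n - k) * F (V z))) \<longlongrightarrow>
                 (deriv ^^ n) R w / fact n * 0) (at w)"
      by (rule tendsto_mult [OF R_lim vanish])
    also have "(deriv ^^ n) R w / fact n * 0 =
        of_nat (k choose n) * (deriv ^^ n) R w * V' ^ (k - n) * ((deriv ^^ k) f w / fact k)"
      using False by simp
    finally have lim: "((\<lambda>z. R z / (z - w)^n * ((z - w)^(n - k) * F (V z))) \<longlongrightarrow>
        of_nat (k choose n) * (deriv ^^ n) R w * V' ^ (k - n) * ((deriv ^^ k) f w / fact k)) (at w)" .
    have "eventually (\<lambda>z. R z / (z - w)^n * ((z - w)^(n - k) * F (V z)) =
                                  R z * F (V z) / (z - w)^k) (at w)"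
      using ev_ne by eventually_elim (use False in \<open>simp add: field_simps power_add [symmetric]\<close>)
    with lim show ?thesis
      unfolding F_def by (rule Lim_transform_eventually)
  qed
qed

lemma eigenvalue_at_fixpoint_of_order:
  fixes f P R U V :: "complex \<Rightarrow> complex"
  assumes holf: "f holomorphic_on S" and holR: "R holomorphic_on S" and S: "open S" "w \<in> S"
    and P: "isCont P w"
    and U: "(U has_field_derivative U') (at w)" "U w = w"
    and V: "(V has_field_derivative V') (at w)" "V w = w"
    and R_zeros: "\<And>j. j < n \<Longrightarrow> (deriv ^^ j) R w = 0"
    and order: "(deriv ^^ k) f w \<noteq> 0" "\<And>j. j < k \<Longrightarrow> (deriv ^^ j) f w = 0"
    and eigen: "\<And>z. z \<in> S \<Longrightarrow> P z * f (U z) + R z * (deriv ^^ n) f (V z) = c * f z"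
  shows "c = P w * U' ^ k + of_nat (k choose n) * (deriv ^^ n) R w * V' ^ (k - n)"
proof -
  define a where "a = (deriv ^^ k) f w / fact k"
  define b where "b = of_nat (k choose n) * (deriv ^^ n) R w * V' ^ (k - n)"
  have "(P \<longlongrightarrow> P w) (at w)"
    using P by (simp add: isCont_def)
  then have "((\<lambda>z. P z * (f (U z) / (z - w)^k) + R z * (deriv ^^ n) f (V z) / (z - w)^k)
               \<longlongrightarrow> P w * (U' ^ k * a) + b * a) (at w)"
    unfolding a_def b_def
    by (intro tendsto_add tendsto_mult tendsto_comp_div_power_at_fixpoint [OF holf S order(2) U]
        tendsto_weighted_deriv_comp_div_power [OF holf holR S V R_zeros order(2)])
  moreover have "eventually (\<lambda>z. P z * (f (U z) / (z - w)^k) + R z * (deriv ^^ n) f (V z) / (z - w)^k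
                                 = c * (f z / (z - w)^k)) (at w)"
    using eventually_at_in_open' [OF S]
    by eventually_elim (simp add: eigen add_divide_distrib [symmetric])
  ultimately have "((\<lambda>z. c * (f z / (z - w)^k)) \<longlongrightarrow> P w * (U' ^ k * a) + b * a) (at w)"
    by (rule Lim_transform_eventually)
  moreover have "((\<lambda>z. c * (f z / (z - w)^k)) \<longlongrightarrow> c * a) (at w)"
    unfolding a_def by (intro tendsto_mult tendsto_const tendsto_div_power_at_zero_of_order [OF holf S order(2)])
  ultimately have "c * a = (P w * U' ^ k + b) * a"
    using tendsto_unique [OF at_neq_bot] by (metis distrib_right mult.assoc)
  moreover have "a \<noteq> 0"
    using order(1) by (simp add: a_def)
  ultimately show ?thesis
    unfolding b_def by simp
qed

lemma holomorphic_nonzero_obtain_order: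
  fixes f :: "complex \<Rightarrow> complex"
  assumes "f holomorphic_on S" "open S" "connected S" "w \<in> S" "z \<in> S" "f z \<noteq> 0"
  obtains k where "(deriv ^^ k) f w \<noteq> 0" "\<And>j. j < k \<Longrightarrow> (deriv ^^ j) f w = 0"
proof -
  have "\<exists>k. (deriv ^^ k) f w \<noteq> 0"
  proof (rule ccontr)
    assume "\<not> (\<exists>k. (deriv ^^ k) f w \<noteq> 0)"
    then have "f z = 0"
      using holomorphic_fun_eq_0_on_connected [OF assms(1-3) _ assms(4,5)] by blast
    with assms(6) show False ..
  qed
  define k where "k = (LEAST k. (deriv ^^ k) f w \<noteq> 0)"
  show ?thesis
  proof (rule that)
    show "(deriv ^^ k) f w \<noteq> 0"
      unfolding k_def by (rule LeastI_ex) fact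
  next
    fix j assume "j < k"
    then show "(deriv ^^ j) f w = 0"
      unfolding k_def using not_less_Least by blast
  qed
qed

theorem proposition2p2:
  fixes \<alpha> :: real and n :: nat and \<psi>0 \<psi>n \<phi>0 \<phi>n :: "complex \<Rightarrow> complex" and w :: complex
  assumes "\<alpha> \<ge> -1" and "n \<ge> 1"
    and "\<psi>0 holomorphic_on udisk" and "\<psi>n holomorphic_on udisk"
    and "self_map \<phi>0" and "self_map \<phi>n"
    and "bounded_on_H \<alpha> (wcomp \<psi>0 \<phi>0)"
    and "bounded_on_H \<alpha> (wdiffcomp \<psi>n \<phi>n n)"
    and "w \<in> udisk" and "\<phi>0 w = w" and "\<phi>n w = w"
    and "\<forall>j<n. (deriv ^^ j) \<psi>n w = 0"
  shows "point_spectrum \<alpha> (\<lambda>f z. wcomp \<psi>0 \<phi>0 f z + wdiffcomp \<psi>n \<phi>n n f z) \<subseteq>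
           {\<psi>0 w}
           \<union> {\<psi>0 w * (deriv \<phi>0 w) ^ l | l. 1 \<le> l \<and> l \<le> n - 1}
           \<union> {\<psi>0 w * (deriv \<phi>0 w) ^ l + of_nat (l choose n) * (deriv ^^ n) \<psi>n w * (deriv \<phi>n w) ^ (l - n) | l. l \<ge> n}"
proof
  fix c assume "c \<in> point_spectrum \<alpha> (\<lambda>f z. wcomp \<psi>0 \<phi>0 f z + wdiffcomp \<psi>n \<phi>n n f z)"
  then obtain f z where f: "f holomorphic_on udisk" and "z \<in> udisk" "f z \<noteq> 0"
    and eigen: "\<And>z. z \<in> udisk \<Longrightarrow> \<psi>0 z * f (\<phi>0 z) + \<psi>n z * (deriv ^^ n) f (\<phi>n z) = c * f z"
    by (auto simp: point_spectrum_def Hspace_def wcomp_def wdiffcomp_def)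
  then obtain k where order: "(deriv ^^ k) f w \<noteq> 0" "\<And>j. j < k \<Longrightarrow> (deriv ^^ j) f w = 0"
    using holomorphic_nonzero_obtain_order [OF f open_ball connected_ball \<open>w \<in> udisk\<close>] by blast
  have deriv_at_w: "(\<phi> has_field_derivative deriv \<phi> w) (at w)" if "self_map \<phi>" for \<phi>
    using that \<open>w \<in> udisk\<close> unfolding self_map_def by (meson holomorphic_derivI open_ball)
  have "isCont \<psi>0 w"
    using assms(3) \<open>w \<in> udisk\<close>
    by (meson continuous_on_eq_continuous_at holomorphic_on_imp_continuous_on open_ball)
  then have "c = \<psi>0 w * deriv \<phi>0 w ^ k + of_nat (k choose n) * (deriv ^^ n) \<psi>n w * deriv \<phi>n w ^ (k - n)"
    using eigenvalue_at_fixpoint_of_order [OF f assms(4) open_ball \<open>w \<in> udisk\<close> _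
        deriv_at_w [OF assms(5)] assms(10) deriv_at_w [OF assms(6)] assms(11) _ order eigen]
      assms(12) by blast
  then show "c \<in> {\<psi>0 w}
           \<union> {\<psi>0 w * (deriv \<phi>0 w) ^ l | l. 1 \<le> l \<and> l \<le> n - 1}
           \<union> {\<psi>0 w * (deriv \<phi>0 w) ^ l + of_nat (l choose n) * (deriv ^^ n) \<psi>n w * (deriv \<phi>n w) ^ (l - n) | l. l \<ge> n}"
    using \<open>n \<ge> 1\<close> by (cases "k = 0"; cases "k < n") (auto simp: binomial_eq_0)
qed

end
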